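(* Let $K\ge 1$ be an integer, $\epsilon>0$, and $\tau_r> 0$. Let $\mathbf{s}=(s_0,\dots,s_{K-1})\in\mathbb{C}^K$ be a fixed (deterministic) vector, and let $\mathbf{d}=\mathbf{s}+\boldsymbol{\xi}$, where $\boldsymbol{\xi}=(\xi_0,\dots,\xi_{K-1})$ is a random vector whose $2K$ real components $\Re\xi_0,\dots,\Re\xi_{K-1},\Im\xi_0,\dots,\Im\xi_{K-1}$ are independent with each $\sim\mathcal{N}(0,\epsilon^2)$ (mean $0$, standard deviation $\epsilon$). For $\mathbf{x}\in\mathbb{C}^K$ define the DFT $\widehat{x}_k=\sum_{j=0}^{K-1}x_j e^{-2\pi i jk/K}$, with inverse $x_k=\frac1K\sum_{j=0}^{K-1}\widehat{x}_j e^{2\pi i jk/K}$. Define the denoised vector $\mathbf{r}\in\mathbb{C}^K$ by $\widehat{r}_k=\widehat{d}_k$ if $|\widehat{d}_k|\ge\tau_r$ and $\widehat{r}_k=0$ otherwise, and $\mathbf{r}$ the inverse DFT of $\widehat{\mathbf{r}}$. Then $$\frac1K\,\mathbb{E}\big[\|\mathbf{r}-\mathbf{s}\|_2^2\big]\le 2\epsilon^2\,G(\tau_r,K,\epsilon,\mathbf{s}),$$ where, with $q(z)=e^{-z}(1+z)$, $\mathbb{I}$ denoting indicator functions and $\operatorname{Erf}(z)=\frac{2}{\sqrt\pi}\int_0^z e^{-t^2}dt$, $$G(\tau_r,K,\epsilon,\mathbf{s})=\frac1K\sum_{k=0}^{K-1}\Big[\mathbb{I}_{\tau_r\ge|\widehat{s}_k|}\,q\Big(\frac{(\tau_r-|\widehat{s}_k|)^2}{2\epsilon^2K}\Big)+\mathbb{I}_{\tau_r<|\widehat{s}_k|}\Big]$$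 $$+\frac{1}{2K\epsilon^2}\sum_{k=0}^{K-1}\frac{|\widehat{s}_k|^2}{4K}\Big[\operatorname{Erf}\Big(\tfrac{-\Re\widehat{s}_k+\tau_r}{\sqrt{2\epsilon^2K}}\Big)-\operatorname{Erf}\Big(\tfrac{-\Re\widehat{s}_k-\tau_r}{\sqrt{2\epsilon^2K}}\Big)\Big]\Big[\operatorname{Erf}\Big(\tfrac{-\Im\widehat{s}_k+\tau_r}{\sqrt{2\epsilon^2K}}\Big)-\operatorname{Erf}\Big(\tfrac{-\Im\widehat{s}_k-\tau_r}{\sqrt{2\epsilon^2K}}\Big)\Big].$$
   Context: $\|\mathbf{x}\|_2=(\sum_k|x_k|^2)^{1/2}$ is the Euclidean norm on $\mathbb{C}^K$. The vector $\mathbf{s}$ models a noiseless signal, $\mathbf{d}$ the noisy data, and $\mathbf{r}$ the Fourier hard-thresholded (denoised) reconstruction with threshold $\tau_r$; $\widehat{s}_k,\widehat{d}_k$ are the DFT coefficients of $\mathbf{s},\mathbf{d}$ under the stated convention. *)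

theory Defs
  imports "HOL-Probability.Probability"
begin

definition dft :: "nat \<Rightarrow> (nat \<Rightarrow> complex) \<Rightarrow> nat \<Rightarrow> complex" where
  "dft K x k = (\<Sum>j<K. x j * cis (- 2 * pi * real j * real k / real K))"

definition idft :: "nat \<Rightarrow> (nat \<Rightarrow> complex) \<Rightarrow> nat \<Rightarrow> complex" where
  "idft K y k = (1 / of_nat K) * (\<Sum>j<K. y j * cis (2 * pi * real j * real k / real K))"

definition sqnorm :: "nat \<Rightarrow> (nat \<Rightarrow> complex) \<Rightarrow> real" where
  "sqnorm K x = (\<Sum>k<K. (cmod (x k))\<^sup>2)"

definition hard_threshold :: "nat \<Rightarrow> real \<Rightarrow> (nat \<Rightarrow> complex) \<Rightarrow> nat \<Rightarrow> complex" where
  "hard_threshold K tau d =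
     idft K (\<lambda>k. if cmod (dft K d k) \<ge> tau then dft K d k else 0)"

text \<open>Error function (signed interval integral).\<close>
definition Erf :: "real \<Rightarrow> real" where
  "Erf z = 2 / sqrt pi * (LBINT t=0..z. exp (- (t\<^sup>2)))"

definition qfun :: "real \<Rightarrow> real" where
  "qfun z = exp (- z) * (1 + z)"

definition G :: "real \<Rightarrow> nat \<Rightarrow> real \<Rightarrow> (nat \<Rightarrow> complex) \<Rightarrow> real" where
  "G tau K eps s =
     (1 / real K) * (\<Sum>k<K.
        (if tau \<ge> cmod (dft K s k)
         then qfun ((tau - cmod (dft K s k))\<^sup>2 / (2 * eps\<^sup>2 * real K)) else 0)
        + (if tau < cmod (dft K s k) then 1 else 0))
   + (1 / (2 * real K * eps\<^sup>2)) * (\<Sum>k<K.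
        (cmod (dft K s k))\<^sup>2 / (4 * real K)
        * (Erf ((- Re (dft K s k) + tau) / sqrt (2 * eps\<^sup>2 * real K))
           - Erf ((- Re (dft K s k) - tau) / sqrt (2 * eps\<^sup>2 * real K)))
        * (Erf ((- Im (dft K s k) + tau) / sqrt (2 * eps\<^sup>2 * real K))
           - Erf ((- Im (dft K s k) - tau) / sqrt (2 * eps\<^sup>2 * real K))))"

text \<open>Law of the noise: 2K independent N(0,eps^2) real coordinates; coordinate j<K is
  Re xi_j and coordinate K+j is Im xi_j.\<close>
definition noise_measure :: "nat \<Rightarrow> real \<Rightarrow> (nat \<Rightarrow> real) measure" where
  "noise_measure K eps = PiM {..<2*K} (\<lambda>_. density lborel (normal_density 0 eps))"

definition noise_vec :: "nat \<Rightarrow> (nat \<Rightarrow> real) \<Rightarrow> nat \<Rightarrow> complex" where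
  "noise_vec K w j = Complex (w j) (w (K + j))"

end

theory Submission
  imports Defs
begin

text \<open>
  Write \<open>s\<^sub>k\<close>, \<open>\<xi>\<^sub>k\<close> for the Fourier coefficients of signal and noise. By Parseval's identity
  \<open>K \<parallel>r - s\<parallel>\<^sup>2\<close> is the sum over \<open>k\<close> of the coefficient errors, which are \<open>\<bar>\<xi>\<^sub>k\<bar>\<^sup>2\<close> if
  \<open>\<bar>s\<^sub>k + \<xi>\<^sub>k\<bar> \<ge> \<tau>\<close> and \<open>\<bar>s\<^sub>k\<bar>\<^sup>2\<close> otherwise. Each \<open>\<xi>\<^sub>k\<close> is a sum of \<open>K\<close> independent rotated
  complex Gaussians, so by rotation invariance and the convolution rule for normal densities it is
  a complex Gaussian with independent \<open>N(0, \<epsilon>\<^sup>2 K)\<close> parts. In the first case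
  \<open>\<bar>\<xi>\<^sub>k\<bar>\<^sup>2 \<ge> T = ((\<tau> - \<bar>s\<^sub>k\<bar>)\<^sub>+)\<^sup>2\<close>, and the second moment of a complex Gaussian truncated to
  \<open>\<bar>\<xi>\<^sub>k\<bar>\<^sup>2 \<ge> T\<close> is \<open>2\<sigma>\<^sup>2 q(T / 2\<sigma>\<^sup>2)\<close>; in the second case both components of \<open>s\<^sub>k + \<xi>\<^sub>k\<close>
  lie in \<open>(-\<tau>, \<tau>)\<close>, an event whose probability is a product of two \<open>Erf\<close> differences.
\<close>

section \<open>Discrete Fourier transform\<close>

lemma sum_cis_orthogonality:
  assumes "a < K" "b < K"
  shows "(\<Sum>k<K. cis (2 * pi * real k * (real a - real b) / real K)) = (if a = b then of_nat K else 0)"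
proof (cases "a = b")
  case True then show ?thesis by simp
next
  case False
  define z where "z = cis (2 * pi * (real a - real b) / real K)"
  have K0: "K > 0" using assms by auto
  have powers: "cis (2 * pi * real k * (real a - real b) / real K) = z ^ k" for k
  proof -
    have "z ^ k = cis (real k * (2 * pi * (real a - real b) / real K))"
      unfolding z_def by (rule Complex.DeMoivre)
    then show ?thesis by (simp add: field_simps)
  qed
  have "z ^ K = cis (2 * pi * of_int (int a - int b))"
    unfolding z_def Complex.DeMoivre using K0 by simp
  then have root: "z ^ K = 1" by (simp only: cis_multiple_2pi[OF Ints_of_int])
  have "z \<noteq> 1"
  proof
    assume "z = 1"
    then have "cos (2 * pi * (real a - real b) / real K) = 1"
      by (metis z_def cis.sel(1) one_complex.sel(1))
    then obtain m :: int where "2 * pi * (real a - real b) / real K = 2 * pi * of_int m"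
      by (metis cos_one_2pi_int mult.commute mult.left_commute)
    then have "2 * pi * ((real a - real b) / real K) = 2 * pi * of_int m" by simp
    then have "(real a - real b) / real K = of_int m" by (subst (asm) mult_left_cancel) auto
    then have "real a - real b = real K * of_int m" using K0 by (simp add: field_simps)
    then have "int a - int b = int K * m" by (metis of_int_eq_iff of_int_mult of_int_of_nat_eq of_int_diff)
    moreover have "\<bar>int a - int b\<bar> < int K" using assms by auto
    ultimately have "int K * \<bar>m\<bar> < int K * 1" by (simp add: abs_mult)
    then have "m = 0" using K0 by (simp add: mult_less_cancel_left_pos)
    with \<open>int a - int b = int K * m\<close> False show False by simp
  qed
  with root have "(\<Sum>k<K. z ^ k) = 0" by (simp add: geometric_sum)
  with False powers show ?thesis by simp
qed

lemma dft_idft: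
  assumes "k < K"
  shows "dft K (idft K y) k = y k"
proof -
  have "dft K (idft K y) k
      = (1 / of_nat K) * (\<Sum>l<K. \<Sum>j<K. y j * (cis (2 * pi * real j * real l / real K) * cis (- 2 * pi * real l * real k / real K)))"
    unfolding dft_def idft_def by (simp add: sum_distrib_left sum_distrib_right mult_ac)
  also have "\<dots> = (1 / of_nat K) * (\<Sum>j<K. y j * (\<Sum>l<K. cis (2 * pi * real l * (real j - real k) / real K)))"
    by (subst sum.swap) (simp add: sum_distrib_left cis_mult algebra_simps diff_divide_distrib)
  also have "\<dots> = y k"
    using assms by (simp add: sum_cis_orthogonality if_distrib cong: if_cong)
  finally show ?thesis .
qed

lemma idft_dft:
  assumes "k < K"
  shows "idft K (dft K x) k = x k"
proof -
  have "idft K (dft K x) k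
      = (1 / of_nat K) * (\<Sum>l<K. \<Sum>j<K. x j * (cis (- 2 * pi * real j * real l / real K) * cis (2 * pi * real l * real k / real K)))"
    unfolding dft_def idft_def by (simp add: sum_distrib_left sum_distrib_right mult_ac)
  also have "\<dots> = (1 / of_nat K) * (\<Sum>j<K. x j * (\<Sum>l<K. cis (2 * pi * real l * (real k - real j) / real K)))"
    by (subst sum.swap) (simp add: sum_distrib_left cis_mult algebra_simps diff_divide_distrib)
  also have "\<dots> = x k"
    using assms by (simp add: sum_cis_orthogonality if_distrib cong: if_cong)
  finally show ?thesis .
qed

lemma sqnorm_idft:
  assumes "K > 0"
  shows "sqnorm K (idft K y) = sqnorm K y / real K"
proof -
  have cnj_idft: "cnj (idft K y k) = (1 / of_nat K) * (\<Sum>j<K. cnj (y j) * cis (- 2 * pi * real j * real k / real K))" for k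
    unfolding idft_def by (simp add: cis_cnj)
  have "complex_of_real (sqnorm K (idft K y)) = (\<Sum>k<K. idft K y k * cnj (idft K y k))"
    unfolding sqnorm_def by (simp only: of_real_sum complex_norm_square)
  also have "\<dots> = (1 / of_nat K) * (\<Sum>k<K. \<Sum>j<K. cnj (y j) * (idft K y k * cis (- 2 * pi * real k * real j / real K)))"
    unfolding cnj_idft by (simp add: sum_distrib_left mult_ac)
  also have "\<dots> = (1 / of_nat K) * (\<Sum>j<K. cnj (y j) * dft K (idft K y) j)"
    unfolding dft_def by (subst sum.swap) (simp add: sum_distrib_left)
  also have "\<dots> = (1 / of_nat K) * (\<Sum>j<K. complex_of_real ((cmod (y j))\<^sup>2))"
    by (intro arg_cong2[where f="(*)"] sum.cong refl) (simp add: dft_idft mult.commute flip: complex_norm_square)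
  also have "\<dots> = complex_of_real (sqnorm K y / real K)"
    unfolding sqnorm_def by simp
  finally show ?thesis by (simp only: of_real_eq_iff)
qed

lemma dft_add: "dft K (\<lambda>j. x j + y j) k = dft K x k + dft K y k"
  unfolding dft_def by (simp add: distrib_right sum.distrib)

lemma idft_diff: "idft K (\<lambda>j. x j - y j) k = idft K x k - idft K y k"
  unfolding idft_def by (simp add: left_diff_distrib right_diff_distrib sum_subtractf)

definition threshold_sqerror :: "complex \<Rightarrow> real \<Rightarrow> complex \<Rightarrow> real" where
  "threshold_sqerror a \<tau> z = (if \<tau> \<le> cmod (a + z) then (cmod z)\<^sup>2 else (cmod a)\<^sup>2)"

lemma borel_measurable_threshold_sqerror[measurable]: "threshold_sqerror a \<tau> \<in> borel_measurable borel"
  unfolding threshold_sqerror_def[abs_def] by measurable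

lemma threshold_sqerror_nonneg: "threshold_sqerror a \<tau> z \<ge> 0"
  by (simp add: threshold_sqerror_def)

lemma sqnorm_hard_threshold_error:
  assumes "K > 0"
  shows "sqnorm K (\<lambda>k. hard_threshold K \<tau> (\<lambda>j. s j + \<xi> j) k - s k)
       = (\<Sum>k<K. threshold_sqerror (dft K s k) \<tau> (dft K \<xi> k)) / real K"
proof -
  define y where "y k = (if \<tau> \<le> cmod (dft K (\<lambda>j. s j + \<xi> j) k) then dft K (\<lambda>j. s j + \<xi> j) k else 0) - dft K s k" for k
  have "sqnorm K (\<lambda>k. hard_threshold K \<tau> (\<lambda>j. s j + \<xi> j) k - s k) = sqnorm K (idft K y)"
    unfolding sqnorm_def hard_threshold_def y_def
    by (intro sum.cong refl) (simp add: idft_diff idft_dft)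
  also have "\<dots> = (\<Sum>k<K. threshold_sqerror (dft K s k) \<tau> (dft K \<xi> k)) / real K"
    unfolding sqnorm_idft[OF assms] unfolding sqnorm_def y_def
    by (intro arg_cong2[where f="(/)"] sum.cong refl) (auto simp: dft_add threshold_sqerror_def)
  finally show ?thesis .
qed

section \<open>Rotation invariance of the complex Gaussian\<close>

lemma measurable_Complex[measurable (raw)]:
  "f \<in> borel_measurable M \<Longrightarrow> g \<in> borel_measurable M \<Longrightarrow> (\<lambda>x. Complex (f x) (g x)) \<in> borel_measurable M"
  unfolding Complex_eq
  by (intro borel_measurable_add borel_measurable_times measurable_const)
     (auto intro: measurable_compose[OF _ borel_measurable_of_real])

lemma nn_integral_lborel_shear_Re:
  fixes F :: "complex \<Rightarrow> ennreal"
  assumes [measurable]: "F \<in> borel_measurable borel"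
  shows "(\<integral>\<^sup>+b. \<integral>\<^sup>+a. F (Complex (a + c * b) b) \<partial>lborel \<partial>lborel) = (\<integral>\<^sup>+b. \<integral>\<^sup>+a. F (Complex a b) \<partial>lborel \<partial>lborel)"
proof (rule nn_integral_cong)
  fix b :: real
  show "(\<integral>\<^sup>+a. F (Complex (a + c * b) b) \<partial>lborel) = (\<integral>\<^sup>+a. F (Complex a b) \<partial>lborel)"
    using nn_integral_real_affine[of "\<lambda>a. F (Complex a b)" 1 "c * b"] by (simp add: add.commute)
qed

lemma nn_integral_lborel_shear_Im:
  fixes F :: "complex \<Rightarrow> ennreal"
  assumes [measurable]: "F \<in> borel_measurable borel"
  shows "(\<integral>\<^sup>+b. \<integral>\<^sup>+a. F (Complex a (b + c * a)) \<partial>lborel \<partial>lborel) = (\<integral>\<^sup>+b. \<integral>\<^sup>+a. F (Complex a b) \<partial>lborel \<partial>lborel)"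
proof -
  have "(\<integral>\<^sup>+b. \<integral>\<^sup>+a. F (Complex a (b + c * a)) \<partial>lborel \<partial>lborel) = (\<integral>\<^sup>+a. \<integral>\<^sup>+b. F (Complex a (b + c * a)) \<partial>lborel \<partial>lborel)"
    by (rule lborel_pair.Fubini') measurable
  also have "\<dots> = (\<integral>\<^sup>+a. \<integral>\<^sup>+b. F (Complex a b) \<partial>lborel \<partial>lborel)"
  proof (rule nn_integral_cong)
    fix a :: real
    show "(\<integral>\<^sup>+b. F (Complex a (b + c * a)) \<partial>lborel) = (\<integral>\<^sup>+b. F (Complex a b) \<partial>lborel)"
      using nn_integral_real_affine[of "\<lambda>b. F (Complex a b)" 1 "c * a"] by (simp add: add.commute)
  qed
  also have "\<dots> = (\<integral>\<^sup>+b. \<integral>\<^sup>+a. F (Complex a b) \<partial>lborel \<partial>lborel)"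
    by (rule lborel_pair.Fubini'[symmetric]) measurable
  finally show ?thesis .
qed

lemma nn_integral_lborel_uminus:
  fixes F :: "complex \<Rightarrow> ennreal"
  assumes [measurable]: "F \<in> borel_measurable borel"
  shows "(\<integral>\<^sup>+b. \<integral>\<^sup>+a. F (- Complex a b) \<partial>lborel \<partial>lborel) = (\<integral>\<^sup>+b. \<integral>\<^sup>+a. F (Complex a b) \<partial>lborel \<partial>lborel)"
proof -
  have "(\<integral>\<^sup>+b. \<integral>\<^sup>+a. F (Complex (- a) (- b)) \<partial>lborel \<partial>lborel) = (\<integral>\<^sup>+b. \<integral>\<^sup>+a. F (Complex a (- b)) \<partial>lborel \<partial>lborel)"
  proof (rule nn_integral_cong)
    fix b :: real
    show "(\<integral>\<^sup>+a. F (Complex (- a) (- b)) \<partial>lborel) = (\<integral>\<^sup>+a. F (Complex a (- b)) \<partial>lborel)"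
      using nn_integral_real_affine[of "\<lambda>a. F (Complex a (- b))" "-1" 0] by simp
  qed
  also have "\<dots> = (\<integral>\<^sup>+b. \<integral>\<^sup>+a. F (Complex a b) \<partial>lborel \<partial>lborel)"
    using nn_integral_real_affine[of "\<lambda>b. \<integral>\<^sup>+a. F (Complex a b) \<partial>lborel" "-1" 0] by simp
  finally show ?thesis by (simp add: complex_minus)
qed

lemma nn_integral_lborel_rotate:
  fixes F :: "complex \<Rightarrow> ennreal"
  assumes [measurable]: "F \<in> borel_measurable borel"
  shows "(\<integral>\<^sup>+b. \<integral>\<^sup>+a. F (Complex a b * cis t) \<partial>lborel \<partial>lborel) = (\<integral>\<^sup>+b. \<integral>\<^sup>+a. F (Complex a b) \<partial>lborel \<partial>lborel)"
proof -
  define c s where "c = cos t" and "s = sin t"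
  have cs: "c\<^sup>2 + s\<^sup>2 = 1" unfolding c_def s_def by simp
  have rot: "Complex a b * cis t = Complex (a * c - b * s) (a * s + b * c)" for a b
    unfolding c_def s_def by (simp add: complex_eq_iff)
  show ?thesis
  proof (cases "s = 0")
    case True
    then consider "c = 1" | "c = -1" using cs by (auto simp: power2_eq_1_iff)
    then show ?thesis
      by cases (use True nn_integral_lborel_uminus[OF assms] in \<open>simp_all add: rot complex_minus\<close>)
  next
    case False
    \<comment> \<open>Paeth's decomposition: the rotation is the product of the shears with slopes \<alpha>, s, \<alpha>.\<close>
    define \<alpha> where "\<alpha> = (c - 1) / s"
    have \<alpha>s: "\<alpha> * s = c - 1" using False by (simp add: \<alpha>_def)
    have "c = 1 + \<alpha> * s" using \<alpha>s by simp
    then have "2 * \<alpha> + \<alpha> * \<alpha> * s = \<alpha> * (1 + c)" by (simp add: algebra_simps)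
    also have "\<dots> = (c * c - 1) / s" by (simp add: \<alpha>_def algebra_simps)
    also have "\<dots> = - s" using cs False by (simp add: field_simps power2_eq_square)
    finally have \<alpha>\<alpha>s: "2 * \<alpha> + \<alpha> * \<alpha> * s = - s" .
    have shears: "Complex a b * cis t
        = Complex ((a + \<alpha> * b) + \<alpha> * (b + s * (a + \<alpha> * b))) (b + s * (a + \<alpha> * b))" for a b
    proof -
      have "(a + \<alpha> * b) + \<alpha> * (b + s * (a + \<alpha> * b)) = a * (1 + \<alpha> * s) + b * (2 * \<alpha> + \<alpha> * \<alpha> * s)"
        "b + s * (a + \<alpha> * b) = a * s + b * (1 + \<alpha> * s)"
        by (simp_all add: algebra_simps)
      then show ?thesis unfolding rot by (simp add: \<alpha>s \<alpha>\<alpha>s)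
    qed
    define F1 where "F1 z = F (Complex (Re z + \<alpha> * Im z) (Im z))" for z
    define F2 where "F2 z = F1 (Complex (Re z) (Im z + s * Re z))" for z
    have [measurable]: "F1 \<in> borel_measurable borel" "F2 \<in> borel_measurable borel"
      unfolding F1_def[abs_def] F2_def[abs_def] by measurable
    have "(\<integral>\<^sup>+b. \<integral>\<^sup>+a. F (Complex a b * cis t) \<partial>lborel \<partial>lborel)
        = (\<integral>\<^sup>+b. \<integral>\<^sup>+a. F2 (Complex (a + \<alpha> * b) b) \<partial>lborel \<partial>lborel)"
      by (simp add: shears F1_def F2_def)
    also have "\<dots> = (\<integral>\<^sup>+b. \<integral>\<^sup>+a. F1 (Complex a (b + s * a)) \<partial>lborel \<partial>lborel)"
      by (subst nn_integral_lborel_shear_Re) (simp_all add: F2_def)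
    also have "\<dots> = (\<integral>\<^sup>+b. \<integral>\<^sup>+a. F (Complex (a + \<alpha> * b) b) \<partial>lborel \<partial>lborel)"
      by (subst nn_integral_lborel_shear_Im) (simp_all add: F1_def)
    also have "\<dots> = (\<integral>\<^sup>+b. \<integral>\<^sup>+a. F (Complex a b) \<partial>lborel \<partial>lborel)"
      by (rule nn_integral_lborel_shear_Re) measurable
    finally show ?thesis .
  qed
qed

abbreviation normal_measure :: "real \<Rightarrow> real measure" where
  "normal_measure \<sigma> \<equiv> density lborel (\<lambda>x. ennreal (normal_density 0 \<sigma> x))"

lemma sigma_finite_normal_measure: "sigma_finite_measure (normal_measure \<sigma>)"
  by (subst sigma_finite_measure.sigma_finite_iff_density_finite[OF sigma_finite_lborel]) auto

lemma pair_sigma_finite_normal_measure: "pair_sigma_finite (normal_measure \<sigma>) (normal_measure \<tau>)"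
  by (intro pair_sigma_finite.intro sigma_finite_normal_measure)

lemma product_sigma_finite_normal_measure: "product_sigma_finite (\<lambda>_. normal_measure \<sigma>)"
  unfolding product_sigma_finite_def using sigma_finite_normal_measure by blast

lemma measurable_pair_normal_measure[measurable (raw)]:
  "f \<in> borel_measurable (lborel \<Otimes>\<^sub>M lborel) \<Longrightarrow> f \<in> borel_measurable (normal_measure \<sigma> \<Otimes>\<^sub>M normal_measure \<tau>)"
  by (subst measurable_cong_sets[OF sets_pair_measure_cong[OF sets_density sets_density] refl])

lemma borel_measurable_nn_integral_normal_measure[measurable (raw)]:
  "case_prod f \<in> borel_measurable (M \<Otimes>\<^sub>M lborel) \<Longrightarrow> (\<lambda>x. \<integral>\<^sup>+y. f x y \<partial>normal_measure \<sigma>) \<in> borel_measurable M"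
  by (rule sigma_finite_measure.borel_measurable_nn_integral[OF sigma_finite_normal_measure])
     (subst measurable_cong_sets[OF sets_pair_measure_cong[OF refl sets_density] refl])

lemma measurable_component_PiM_normal_measure[measurable (raw)]:
  "i \<in> I \<Longrightarrow> (\<lambda>w. w i) \<in> borel_measurable (PiM I (\<lambda>_. normal_measure \<sigma>))"
  using measurable_component_singleton[of i I "\<lambda>_. normal_measure \<sigma>"]
  by (simp add: measurable_cong_sets[OF refl sets_density])

lemma nn_integral_normal_measure_pair:
  fixes F :: "complex \<Rightarrow> ennreal"
  assumes [measurable]: "F \<in> borel_measurable borel"
  shows "(\<integral>\<^sup>+b. \<integral>\<^sup>+a. F (Complex a b) \<partial>normal_measure \<sigma> \<partial>normal_measure \<sigma>)
       = (\<integral>\<^sup>+b. \<integral>\<^sup>+a. ennreal (normal_density 0 \<sigma> a * normal_density 0 \<sigma> b) * F (Complex a b) \<partial>lborel \<partial>lborel)"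
proof -
  have "(\<integral>\<^sup>+b. \<integral>\<^sup>+a. F (Complex a b) \<partial>normal_measure \<sigma> \<partial>normal_measure \<sigma>)
      = (\<integral>\<^sup>+b. ennreal (normal_density 0 \<sigma> b) * \<integral>\<^sup>+a. ennreal (normal_density 0 \<sigma> a) * F (Complex a b) \<partial>lborel \<partial>lborel)"
    by (simp add: nn_integral_density)
  also have "\<dots> = (\<integral>\<^sup>+b. \<integral>\<^sup>+a. ennreal (normal_density 0 \<sigma> a * normal_density 0 \<sigma> b) * F (Complex a b) \<partial>lborel \<partial>lborel)"
    by (intro nn_integral_cong) (simp add: nn_integral_cmult[symmetric] ennreal_mult' mult_ac)
  finally show ?thesis .
qed

lemma normal_density_mult_normal_density:
  "normal_density 0 \<sigma> a * normal_density 0 \<sigma> b = exp (- (a\<^sup>2 + b\<^sup>2) / (2 * \<sigma>\<^sup>2)) / (2 * pi * \<sigma>\<^sup>2)"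
  unfolding normal_density_def
  by (simp add: power2_eq_square mult_exp_exp add_divide_distrib diff_divide_distrib mult_ac)

lemma nn_integral_normal_measure_rotate:
  fixes F :: "complex \<Rightarrow> ennreal"
  assumes [measurable]: "F \<in> borel_measurable borel"
  shows "(\<integral>\<^sup>+b. \<integral>\<^sup>+a. F (Complex a b * cis t) \<partial>normal_measure \<sigma> \<partial>normal_measure \<sigma>)
       = (\<integral>\<^sup>+b. \<integral>\<^sup>+a. F (Complex a b) \<partial>normal_measure \<sigma> \<partial>normal_measure \<sigma>)"
proof -
  define H where "H z = ennreal (normal_density 0 \<sigma> (Re z) * normal_density 0 \<sigma> (Im z)) * F z" for z
  have [measurable]: "H \<in> borel_measurable borel" unfolding H_def[abs_def] by measurable
  have "(Re (Complex a b * cis t))\<^sup>2 + (Im (Complex a b * cis t))\<^sup>2 = a\<^sup>2 + b\<^sup>2" for a b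
    using norm_mult[of "Complex a b" "cis t"] unfolding cmod_power2[symmetric] by (simp add: cmod_power2)
  then have "(\<integral>\<^sup>+b. \<integral>\<^sup>+a. F (Complex a b * cis t) \<partial>normal_measure \<sigma> \<partial>normal_measure \<sigma>)
      = (\<integral>\<^sup>+b. \<integral>\<^sup>+a. H (Complex a b * cis t) \<partial>lborel \<partial>lborel)"
    unfolding H_def nn_integral_normal_measure_pair[of "\<lambda>z. F (z * cis t)", simplified]
    by (simp only: normal_density_mult_normal_density)
  also have "\<dots> = (\<integral>\<^sup>+b. \<integral>\<^sup>+a. H (Complex a b) \<partial>lborel \<partial>lborel)"
    by (rule nn_integral_lborel_rotate) measurable
  also have "\<dots> = (\<integral>\<^sup>+b. \<integral>\<^sup>+a. F (Complex a b) \<partial>normal_measure \<sigma> \<partial>normal_measure \<sigma>)"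
    unfolding H_def by (simp add: nn_integral_normal_measure_pair)
  finally show ?thesis .
qed

lemma nn_integral_normal_measure_convolution:
  fixes g :: "real \<Rightarrow> ennreal"
  assumes [measurable]: "g \<in> borel_measurable borel" and "\<sigma> > 0" "\<tau> > 0"
  shows "(\<integral>\<^sup>+a. \<integral>\<^sup>+x. g (a + x) \<partial>normal_measure \<tau> \<partial>normal_measure \<sigma>)
       = (\<integral>\<^sup>+z. g z \<partial>normal_measure (sqrt (\<sigma>\<^sup>2 + \<tau>\<^sup>2)))"
proof -
  have conv: "ennreal (normal_density 0 (sqrt (\<sigma>\<^sup>2 + \<tau>\<^sup>2)) z)
      = (\<integral>\<^sup>+y. ennreal (normal_density 0 \<tau> (z - y) * normal_density 0 \<sigma> y) \<partial>lborel)" for z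
    using fun_cong[OF conv_normal_density_zero_mean[OF assms(3,2)], of z] by (simp add: add.commute)
  have shift: "(\<integral>\<^sup>+z. ennreal (normal_density 0 \<tau> (z - y) * normal_density 0 \<sigma> y) * g z \<partial>lborel)
      = ennreal (normal_density 0 \<sigma> y) * \<integral>\<^sup>+x. ennreal (normal_density 0 \<tau> x) * g (y + x) \<partial>lborel" for y
  proof -
    have "(\<integral>\<^sup>+z. ennreal (normal_density 0 \<tau> (z - y) * normal_density 0 \<sigma> y) * g z \<partial>lborel)
        = (\<integral>\<^sup>+x. ennreal (normal_density 0 \<sigma> y) * (ennreal (normal_density 0 \<tau> x) * g (y + x)) \<partial>lborel)"
      using nn_integral_real_affine[of "\<lambda>z. ennreal (normal_density 0 \<tau> (z - y) * normal_density 0 \<sigma> y) * g z" 1 y]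
      by (simp add: ennreal_mult' mult_ac)
    also have "\<dots> = ennreal (normal_density 0 \<sigma> y) * \<integral>\<^sup>+x. ennreal (normal_density 0 \<tau> x) * g (y + x) \<partial>lborel"
      by (rule nn_integral_cmult) measurable
    finally show ?thesis .
  qed
  have "(\<integral>\<^sup>+z. g z \<partial>normal_measure (sqrt (\<sigma>\<^sup>2 + \<tau>\<^sup>2)))
      = (\<integral>\<^sup>+z. \<integral>\<^sup>+y. ennreal (normal_density 0 \<tau> (z - y) * normal_density 0 \<sigma> y) * g z \<partial>lborel \<partial>lborel)"
    by (simp add: nn_integral_density conv nn_integral_multc)
  also have "\<dots> = (\<integral>\<^sup>+y. \<integral>\<^sup>+z. ennreal (normal_density 0 \<tau> (z - y) * normal_density 0 \<sigma> y) * g z \<partial>lborel \<partial>lborel)"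
    by (rule lborel_pair.Fubini') measurable
  also have "\<dots> = (\<integral>\<^sup>+a. \<integral>\<^sup>+x. g (a + x) \<partial>normal_measure \<tau> \<partial>normal_measure \<sigma>)"
    by (simp add: shift nn_integral_density)
  finally show ?thesis ..
qed

section \<open>Fourier coefficients of the noise\<close>

text \<open>Integral against the sum of \<open>n\<close> independent complex Gaussians with component variance
  \<open>e\<^sup>2\<close>; \<open>n = 0\<close> is separate because \<open>normal_density 0 0\<close> is identically zero, not a point mass.\<close>

definition complex_normal_nn_integral :: "real \<Rightarrow> nat \<Rightarrow> (complex \<Rightarrow> ennreal) \<Rightarrow> ennreal" where
  "complex_normal_nn_integral e n H =
     (if n = 0 then H 0
      else \<integral>\<^sup>+b. \<integral>\<^sup>+a. H (Complex a b) \<partial>normal_measure (e * sqrt n) \<partial>normal_measure (e * sqrt n))"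

lemma borel_measurable_complex_normal_nn_integral[measurable]:
  fixes H :: "complex \<Rightarrow> ennreal"
  assumes [measurable]: "H \<in> borel_measurable borel"
  shows "(\<lambda>w. complex_normal_nn_integral e n (\<lambda>z. H (w + z))) \<in> borel_measurable borel"
  unfolding complex_normal_nn_integral_def by measurable

lemma complex_normal_nn_integral_Suc:
  fixes H :: "complex \<Rightarrow> ennreal"
  assumes [measurable]: "H \<in> borel_measurable borel" and e: "e > 0"
  shows "(\<integral>\<^sup>+b. \<integral>\<^sup>+a. complex_normal_nn_integral e n (\<lambda>z. H (Complex a b + z)) \<partial>normal_measure e \<partial>normal_measure e)
       = complex_normal_nn_integral e (Suc n) H"
proof (cases "n = 0")
  case True
  then show ?thesis by (simp add: complex_normal_nn_integral_def)
next
  case False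
  define s where "s = e * sqrt n"
  have s: "s > 0" using e False by (simp add: s_def)
  have "e\<^sup>2 + s\<^sup>2 = (e * sqrt (Suc n))\<^sup>2"
    by (simp add: s_def power_mult_distrib algebra_simps)
  then have r: "e * sqrt (Suc n) = sqrt (e\<^sup>2 + s\<^sup>2)"
    using e by simp
  have "(\<integral>\<^sup>+b. \<integral>\<^sup>+a. complex_normal_nn_integral e n (\<lambda>z. H (Complex a b + z)) \<partial>normal_measure e \<partial>normal_measure e)
      = (\<integral>\<^sup>+b. \<integral>\<^sup>+a. \<integral>\<^sup>+y. \<integral>\<^sup>+x. H (Complex (a + x) (b + y)) \<partial>normal_measure s \<partial>normal_measure s \<partial>normal_measure e \<partial>normal_measure e)"
    using False by (simp add: complex_normal_nn_integral_def s_def complex_add)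
  also have "\<dots> = (\<integral>\<^sup>+b. \<integral>\<^sup>+y. \<integral>\<^sup>+a. \<integral>\<^sup>+x. H (Complex (a + x) (b + y)) \<partial>normal_measure s \<partial>normal_measure e \<partial>normal_measure s \<partial>normal_measure e)"
    by (intro nn_integral_cong pair_sigma_finite.Fubini'[OF pair_sigma_finite_normal_measure]) measurable
  also have "\<dots> = (\<integral>\<^sup>+b. \<integral>\<^sup>+y. \<integral>\<^sup>+u. H (Complex u (b + y)) \<partial>normal_measure (sqrt (e\<^sup>2 + s\<^sup>2)) \<partial>normal_measure s \<partial>normal_measure e)"
    by (intro nn_integral_cong nn_integral_normal_measure_convolution e s) measurable
  also have "\<dots> = (\<integral>\<^sup>+v. \<integral>\<^sup>+u. H (Complex u v) \<partial>normal_measure (sqrt (e\<^sup>2 + s\<^sup>2)) \<partial>normal_measure (sqrt (e\<^sup>2 + s\<^sup>2)))"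
    by (intro nn_integral_normal_measure_convolution[of "\<lambda>v. \<integral>\<^sup>+u. H (Complex u v) \<partial>normal_measure (sqrt (e\<^sup>2 + s\<^sup>2))"] e s)
       measurable
  also have "\<dots> = complex_normal_nn_integral e (Suc n) H"
    by (simp add: complex_normal_nn_integral_def r del: of_nat_Suc)
  finally show ?thesis .
qed

lemma borel_measurable_sum_Complex_cis:
  assumes "p ` J \<subseteq> I" "q ` J \<subseteq> I"
  shows "(\<lambda>w. \<Sum>j\<in>J. Complex (w (p j)) (w (q j)) * cis (\<theta> j)) \<in> borel_measurable (PiM I (\<lambda>_. normal_measure e))"
proof (rule borel_measurable_sum)
  fix j assume "j \<in> J"
  then have [measurable]: "p j \<in> I" "q j \<in> I" using assms by auto
  show "(\<lambda>w. Complex (w (p j)) (w (q j)) * cis (\<theta> j)) \<in> borel_measurable (PiM I (\<lambda>_. normal_measure e))"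
    by measurable
qed

text \<open>The shift \<open>c\<close> is there to make the induction on \<open>J\<close> go through.\<close>

lemma nn_integral_PiM_sum_rotated_normal:
  fixes H :: "complex \<Rightarrow> ennreal" and p q :: "nat \<Rightarrow> nat" and \<theta> :: "nat \<Rightarrow> real" and I J :: "nat set"
  assumes [measurable]: "H \<in> borel_measurable borel" and e: "e > 0"
    and "finite J" "finite I" "inj_on p J" "inj_on q J" "p ` J \<inter> q ` J = {}" "p ` J \<subseteq> I" "q ` J \<subseteq> I"
  shows "(\<integral>\<^sup>+w. H (c + (\<Sum>j\<in>J. Complex (w (p j)) (w (q j)) * cis (\<theta> j))) \<partial>PiM I (\<lambda>_. normal_measure e))
       = complex_normal_nn_integral e (card J) (\<lambda>z. H (c + z))"
  using assms(3-)
proof (induction J arbitrary: I c rule: finite_induct)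
  case empty
  interpret prob_space "PiM I (\<lambda>_. normal_measure e)"
    by (intro prob_space_PiM prob_space_normal_density e)
  show ?case by (simp add: complex_normal_nn_integral_def emeasure_space_1)
next
  case (insert j J)
  interpret PS: product_sigma_finite "\<lambda>_. normal_measure e"
    by (rule product_sigma_finite_normal_measure)
  define P Q where "P = p j" and "Q = q j"
  define I0 where "I0 = I - {P, Q}"
  define S where "S w = (\<Sum>i\<in>J. Complex (w (p i)) (w (q i)) * cis (\<theta> i))" for w :: "nat \<Rightarrow> real"
  have PQ: "P \<noteq> Q" using insert.prems(4) by (auto simp: P_def Q_def)
  have notJ: "P \<notin> p ` J" "P \<notin> q ` J" "Q \<notin> p ` J" "Q \<notin> q ` J"
    using insert.prems(2,3,4) insert.hyps(2) by (auto simp: P_def Q_def inj_on_def)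
  have I: "I = insert P (insert Q I0)" "P \<notin> insert Q I0" "Q \<notin> I0" "finite I0" "finite (insert Q I0)"
    using insert.prems(1,5,6) PQ by (auto simp: I0_def P_def Q_def)
  have sub0: "p ` J \<subseteq> I0" "q ` J \<subseteq> I0" using insert.prems(5,6) notJ by (auto simp: I0_def)
  have S_upd: "x \<notin> p ` J \<Longrightarrow> x \<notin> q ` J \<Longrightarrow> S (w(x := v)) = S w" for x v w
    unfolding S_def by (intro sum.cong refl) auto
  have sum_insert: "(\<Sum>i\<in>insert j J. Complex (w (p i)) (w (q i)) * cis (\<theta> i)) = Complex (w P) (w Q) * cis (\<theta> j) + S w" for w
    using insert.hyps by (simp add: S_def P_def Q_def)
  have [measurable]: "S \<in> borel_measurable (PiM I0 (\<lambda>_. normal_measure e))"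
    "S \<in> borel_measurable (PiM (insert Q I0) (\<lambda>_. normal_measure e))"
    "S \<in> borel_measurable (PiM I (\<lambda>_. normal_measure e))"
    using sub0 I(1) unfolding S_def[abs_def]
    by (auto intro!: borel_measurable_sum_Complex_cis)
  have [measurable]: "P \<in> I" "Q \<in> I" "Q \<in> insert Q I0" using I(1) by auto
  have pair0: "pair_sigma_finite (normal_measure e) (PiM I0 (\<lambda>_. normal_measure e))"
    by (intro pair_sigma_finite.intro sigma_finite_normal_measure PS.sigma_finite I(4))
  have "(\<integral>\<^sup>+w. H (c + (\<Sum>i\<in>insert j J. Complex (w (p i)) (w (q i)) * cis (\<theta> i))) \<partial>PiM I (\<lambda>_. normal_measure e))
      = (\<integral>\<^sup>+w. H (c + (Complex (w P) (w Q) * cis (\<theta> j) + S w)) \<partial>PiM (insert P (insert Q I0)) (\<lambda>_. normal_measure e))"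
    by (simp only: sum_insert I(1)[symmetric])
  also have "\<dots> = (\<integral>\<^sup>+w. \<integral>\<^sup>+a. H (c + (Complex a (w Q) * cis (\<theta> j) + S w)) \<partial>normal_measure e \<partial>PiM (insert Q I0) (\<lambda>_. normal_measure e))"
    using PQ notJ
    by (subst PS.product_nn_integral_insert[OF I(5) I(2)], unfold I(1)[symmetric], measurable)
       (simp add: S_upd)
  also have "\<dots> = (\<integral>\<^sup>+w. \<integral>\<^sup>+b. \<integral>\<^sup>+a. H (c + (Complex a b * cis (\<theta> j) + S w)) \<partial>normal_measure e \<partial>normal_measure e \<partial>PiM I0 (\<lambda>_. normal_measure e))"
    using PQ notJ
    by (subst PS.product_nn_integral_insert[OF I(4) I(3)], measurable) (simp add: S_upd)
  also have "\<dots> = (\<integral>\<^sup>+w. \<integral>\<^sup>+b. \<integral>\<^sup>+a. H (c + (Complex a b + S w)) \<partial>normal_measure e \<partial>normal_measure e \<partial>PiM I0 (\<lambda>_. normal_measure e))"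
    by (intro nn_integral_cong nn_integral_normal_measure_rotate[of "\<lambda>z. H (c + (z + S _))"]) measurable
  also have "\<dots> = (\<integral>\<^sup>+b. \<integral>\<^sup>+w. \<integral>\<^sup>+a. H (c + (Complex a b + S w)) \<partial>normal_measure e \<partial>PiM I0 (\<lambda>_. normal_measure e) \<partial>normal_measure e)"
    by (rule pair_sigma_finite.Fubini'[OF pair0]) measurable
  also have "\<dots> = (\<integral>\<^sup>+b. \<integral>\<^sup>+a. \<integral>\<^sup>+w. H ((c + Complex a b) + S w) \<partial>PiM I0 (\<lambda>_. normal_measure e) \<partial>normal_measure e \<partial>normal_measure e)"
    unfolding add.assoc by (intro nn_integral_cong pair_sigma_finite.Fubini'[OF pair0]) measurable
  also have "\<dots> = (\<integral>\<^sup>+b. \<integral>\<^sup>+a. complex_normal_nn_integral e (card J) (\<lambda>z. H ((c + Complex a b) + z)) \<partial>normal_measure e \<partial>normal_measure e)"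
    using insert.IH[OF I(4) _ _ _ sub0] insert.prems(2,3,4)
    by (simp add: S_def inj_on_insert)
  also have "\<dots> = complex_normal_nn_integral e (Suc (card J)) (\<lambda>z. H (c + z))"
    using complex_normal_nn_integral_Suc[of "\<lambda>z. H (c + z)" e "card J"] e by (simp add: add.assoc)
  finally show ?case using insert.hyps by simp
qed

lemma nn_integral_dft_noise:
  fixes H :: "complex \<Rightarrow> ennreal"
  assumes "K \<ge> 1" and "e > 0" and [measurable]: "H \<in> borel_measurable borel"
  shows "(\<integral>\<^sup>+w. H (dft K (noise_vec K w) k) \<partial>noise_measure K e)
       = (\<integral>\<^sup>+b. \<integral>\<^sup>+a. H (Complex a b) \<partial>normal_measure (e * sqrt K) \<partial>normal_measure (e * sqrt K))"
proof -
  have "dft K (noise_vec K w) k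
      = 0 + (\<Sum>j\<in>{..<K}. Complex (w j) (w (K + j)) * cis (- 2 * pi * real j * real k / real K))" for w
    by (simp add: dft_def noise_vec_def)
  then have "(\<integral>\<^sup>+w. H (dft K (noise_vec K w) k) \<partial>noise_measure K e)
      = complex_normal_nn_integral e (card {..<K}) (\<lambda>z. H (0 + z))"
    unfolding noise_measure_def
    by (simp only:, intro nn_integral_PiM_sum_rotated_normal[where p = "\<lambda>j. j" and q = "\<lambda>j. K + j"])
       (auto simp: assms inj_on_def)
  then show ?thesis
    using assms(1) by (simp add: complex_normal_nn_integral_def)
qed

lemma borel_measurable_dft_noise[measurable]:
  "(\<lambda>w. dft K (noise_vec K w) k) \<in> borel_measurable (noise_measure K e)"
  unfolding dft_def noise_vec_def noise_measure_def
  by (rule borel_measurable_sum_Complex_cis[where p = "\<lambda>j. j" and q = "\<lambda>j. K + j"]) auto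

section \<open>Gaussian integrals\<close>

lemma nn_integral_lborel_even_le:
  fixes g :: "real \<Rightarrow> ennreal"
  assumes [measurable]: "g \<in> borel_measurable borel" and even: "\<And>x. g (- x) = g x"
  shows "(\<integral>\<^sup>+x. g x \<partial>lborel) \<le> 2 * (\<integral>\<^sup>+x. g x * indicator {0..} x \<partial>lborel)"
proof -
  have "(\<integral>\<^sup>+x. g x \<partial>lborel) \<le> (\<integral>\<^sup>+x. g x * indicator {0..} x + g x * indicator {..0} x \<partial>lborel)"
    by (intro nn_integral_mono) (auto split: split_indicator)
  also have "\<dots> = (\<integral>\<^sup>+x. g x * indicator {0..} x \<partial>lborel) + (\<integral>\<^sup>+x. g x * indicator {..0} x \<partial>lborel)"
    by (rule nn_integral_add) measurable
  also have "(\<integral>\<^sup>+x. g x * indicator {..0} x \<partial>lborel) = (\<integral>\<^sup>+x. g x * indicator {0..} x \<partial>lborel)"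
    using nn_integral_real_affine[of "\<lambda>x. g x * indicator {..0} x" "-1" 0]
    by (simp add: even indicator_def)
  finally show ?thesis by (simp add: mult_2)
qed

lemma nn_integral_lborel_inverse_1_plus_square: "(\<integral>\<^sup>+s. ennreal (1 / (1 + s\<^sup>2)) \<partial>lborel) \<le> ennreal pi"
proof -
  have pos: "1 + s\<^sup>2 > 0" for s :: real
    by (simp add: add_pos_nonneg)
  have "(\<integral>\<^sup>+s. ennreal (1 / (1 + s\<^sup>2)) * indicator {0..} s \<partial>lborel) = ennreal (pi / 2 - arctan 0)"
  proof (rule nn_integral_FTC_atLeast)
    show "(\<lambda>s::real. 1 / (1 + s\<^sup>2)) \<in> borel_measurable borel"
      using pos by (intro borel_measurable_continuous_onI continuous_intros) (auto simp: less_imp_neq[symmetric])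
    show "DERIV arctan x :> 1 / (1 + x\<^sup>2)" for x
      using DERIV_arctan[of x] by (simp add: divide_inverse)
    show "0 \<le> 1 / (1 + x\<^sup>2)" for x :: real
      using pos[of x] by simp
    show "(arctan \<longlongrightarrow> pi / 2) at_top"
      by (rule tendsto_arctan_at_top)
  qed
  then have "(\<integral>\<^sup>+s. ennreal (1 / (1 + s\<^sup>2)) \<partial>lborel) \<le> 2 * ennreal (pi / 2)"
    using nn_integral_lborel_even_le[of "\<lambda>s. ennreal (1 / (1 + s\<^sup>2))"] by simp
  also have "\<dots> = ennreal pi"
    by (simp flip: ennreal_numeral ennreal_mult)
  finally show ?thesis .
qed

lemma nn_integral_lborel_cubic_gaussian_tail:
  fixes \<beta> \<sigma> T :: real
  assumes \<beta>: "\<beta> > 0" and \<sigma>: "\<sigma> > 0" and T: "T \<ge> 0"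
  shows "(\<integral>\<^sup>+x. ennreal (x * ((x\<^sup>2 * \<beta>) * indicator {T..} (x\<^sup>2 * \<beta>) * exp (- (x\<^sup>2 * \<beta>) / (2 * \<sigma>\<^sup>2)))) * indicator {0..} x \<partial>lborel)
       = ennreal ((\<sigma>\<^sup>2 * T + 2 * \<sigma>^4) / \<beta> * exp (- T / (2 * \<sigma>\<^sup>2)))"
proof -
  define x0 where "x0 = sqrt (T / \<beta>)"
  have x0: "x0 \<ge> 0" "\<beta> * x0\<^sup>2 = T" using \<beta> T by (auto simp: x0_def)
  define F where "F x = - ((\<sigma>\<^sup>2 * (\<beta> * x\<^sup>2) + 2 * \<sigma>^4) / \<beta> * exp (- (\<beta> * x\<^sup>2) / (2 * \<sigma>\<^sup>2)))" for x
  have integrand: "ennreal (x * ((x\<^sup>2 * \<beta>) * indicator {T..} (x\<^sup>2 * \<beta>) * exp (- (x\<^sup>2 * \<beta>) / (2 * \<sigma>\<^sup>2)))) * indicator {0..} x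
      = ennreal (\<beta> * x ^ 3 * exp (- (\<beta> * x\<^sup>2) / (2 * \<sigma>\<^sup>2))) * indicator {x0..} x" for x
  proof (cases "x \<ge> 0")
    case True
    have "x0 \<le> x \<longleftrightarrow> \<beta> * x0\<^sup>2 \<le> \<beta> * x\<^sup>2"
      using True x0(1) \<beta> by (simp add: power_mono_iff)
    then have "x0 \<le> x \<longleftrightarrow> T \<le> x\<^sup>2 * \<beta>"
      by (simp add: x0(2) mult.commute)
    then show ?thesis
      using True by (auto simp: indicator_def power3_eq_cube power2_eq_square mult_ac)
  next
    case False
    then show ?thesis using x0(1) by (auto simp: indicator_def)
  qed
  have F_limit: "(F \<longlongrightarrow> 0) at_top"
  proof -
    define u where "u x = \<beta> / (2 * \<sigma>\<^sup>2) * x\<^sup>2" for x :: real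
    have "filterlim (\<lambda>x::real. x ^ 2) at_top at_top"
      by (rule filterlim_pow_at_top[OF _ filterlim_ident]) simp
    then have u: "filterlim u at_top at_top"
      unfolding u_def using \<beta> \<sigma> by (intro filterlim_tendsto_pos_mult_at_top[OF tendsto_const]) auto
    have "((\<lambda>v::real. v ^ 1 / exp v + v ^ 0 / exp v) \<longlongrightarrow> 0 + 0) at_top"
      by (intro tendsto_add tendsto_power_div_exp_0)
    then have "((\<lambda>v::real. (v + 1) * exp (- v)) \<longlongrightarrow> 0) at_top"
      by (simp add: exp_minus field_simps)
    then have "((\<lambda>x. - (2 * \<sigma>^4 / \<beta>) * ((u x + 1) * exp (- u x))) \<longlongrightarrow> - (2 * \<sigma>^4 / \<beta>) * 0) at_top"
      by (intro tendsto_mult tendsto_const filterlim_compose[OF _ u])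
    moreover have "F = (\<lambda>x. - (2 * \<sigma>^4 / \<beta>) * ((u x + 1) * exp (- u x)))"
      using \<beta> \<sigma> by (auto simp: F_def u_def fun_eq_iff field_simps power2_eq_square power4_eq_xxxx)
    ultimately show ?thesis by simp
  qed
  have "(\<integral>\<^sup>+x. ennreal (\<beta> * x ^ 3 * exp (- (\<beta> * x\<^sup>2) / (2 * \<sigma>\<^sup>2))) * indicator {x0..} x \<partial>lborel) = ennreal (0 - F x0)"
  proof (rule nn_integral_FTC_atLeast[OF _ _ _ F_limit])
    show "(\<lambda>x::real. \<beta> * x ^ 3 * exp (- (\<beta> * x\<^sup>2) / (2 * \<sigma>\<^sup>2))) \<in> borel_measurable borel"
      by measurable
    show "DERIV F x :> \<beta> * x ^ 3 * exp (- (\<beta> * x\<^sup>2) / (2 * \<sigma>\<^sup>2))" for x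
      unfolding F_def using \<beta> \<sigma>
      by (auto intro!: derivative_eq_intros simp: field_simps power2_eq_square power3_eq_cube power4_eq_xxxx)
    show "0 \<le> \<beta> * x ^ 3 * exp (- (\<beta> * x\<^sup>2) / (2 * \<sigma>\<^sup>2))" if "x0 \<le> x" for x
      using that x0(1) \<beta> by simp
  qed
  then show ?thesis
    by (simp only: integrand) (simp add: F_def x0(2))
qed

lemma nn_integral_normal_measure_tail_second_moment:
  fixes \<sigma> T :: real
  assumes \<sigma>: "\<sigma> > 0" and T: "T \<ge> 0"
  shows "(\<integral>\<^sup>+b. \<integral>\<^sup>+a. ennreal ((a\<^sup>2 + b\<^sup>2) * indicator {T..} (a\<^sup>2 + b\<^sup>2)) \<partial>normal_measure \<sigma> \<partial>normal_measure \<sigma>)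
       \<le> ennreal (2 * \<sigma>\<^sup>2 * qfun (T / (2 * \<sigma>\<^sup>2)))"
proof -
  define f where "f v = v * indicator {T..} v * exp (- v / (2 * \<sigma>\<^sup>2))" for v :: real
  define C where "C = 1 / (2 * pi * \<sigma>\<^sup>2)"
  define E where "E = exp (- T / (2 * \<sigma>\<^sup>2))"
  define A where "A = \<sigma>\<^sup>2 * T + 2 * \<sigma>^4"
  have [measurable]: "f \<in> borel_measurable borel" unfolding f_def by measurable
  have A: "A \<ge> 0" using \<sigma> T by (simp add: A_def)
  have "(\<integral>\<^sup>+b. \<integral>\<^sup>+a. ennreal ((a\<^sup>2 + b\<^sup>2) * indicator {T..} (a\<^sup>2 + b\<^sup>2)) \<partial>normal_measure \<sigma> \<partial>normal_measure \<sigma>)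
      = (\<integral>\<^sup>+b. \<integral>\<^sup>+a. ennreal (normal_density 0 \<sigma> a * normal_density 0 \<sigma> b) * ennreal ((a\<^sup>2 + b\<^sup>2) * indicator {T..} (a\<^sup>2 + b\<^sup>2)) \<partial>lborel \<partial>lborel)"
    using nn_integral_normal_measure_pair[of "\<lambda>z. ennreal (((Re z)\<^sup>2 + (Im z)\<^sup>2) * indicator {T..} ((Re z)\<^sup>2 + (Im z)\<^sup>2))" \<sigma>]
    by simp
  also have "\<dots> = (\<integral>\<^sup>+b. \<integral>\<^sup>+a. ennreal C * ennreal (f (a\<^sup>2 + b\<^sup>2)) \<partial>lborel \<partial>lborel)"
    by (intro nn_integral_cong)
       (simp add: normal_density_mult_normal_density f_def C_def ennreal_mult'[symmetric] mult_ac)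
  also have "\<dots> = ennreal C * (\<integral>\<^sup>+b. \<integral>\<^sup>+a. ennreal (f (a\<^sup>2 + b\<^sup>2)) \<partial>lborel \<partial>lborel)"
    by (simp add: nn_integral_cmult)
  \<comment> \<open>Substituting \<open>a = b s\<close> in the inner integral decouples the two variables.\<close>
  also have "(\<integral>\<^sup>+b. \<integral>\<^sup>+a. ennreal (f (a\<^sup>2 + b\<^sup>2)) \<partial>lborel \<partial>lborel)
      = (\<integral>\<^sup>+b. \<integral>\<^sup>+s. ennreal (\<bar>b\<bar> * f (b\<^sup>2 * (1 + s\<^sup>2))) \<partial>lborel \<partial>lborel)"
  proof (rule nn_integral_cong_AE)
    show "AE b in lborel. (\<integral>\<^sup>+a. ennreal (f (a\<^sup>2 + b\<^sup>2)) \<partial>lborel) = (\<integral>\<^sup>+s. ennreal (\<bar>b\<bar> * f (b\<^sup>2 * (1 + s\<^sup>2))) \<partial>lborel)"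
      using AE_lborel_singleton[of 0]
    proof eventually_elim
      case (elim b)
      have "(\<integral>\<^sup>+a. ennreal (f (a\<^sup>2 + b\<^sup>2)) \<partial>lborel) = ennreal \<bar>b\<bar> * (\<integral>\<^sup>+s. ennreal (f ((0 + b * s)\<^sup>2 + b\<^sup>2)) \<partial>lborel)"
        using elim by (intro nn_integral_real_affine) auto
      also have "\<dots> = (\<integral>\<^sup>+s. ennreal (\<bar>b\<bar> * f (b\<^sup>2 * (1 + s\<^sup>2))) \<partial>lborel)"
        by (subst nn_integral_cmult[symmetric]) (auto simp: ennreal_mult'[symmetric] power_mult_distrib algebra_simps)
      finally show ?case .
    qed
  qed
  also have "\<dots> = (\<integral>\<^sup>+s. \<integral>\<^sup>+b. ennreal (\<bar>b\<bar> * f (b\<^sup>2 * (1 + s\<^sup>2))) \<partial>lborel \<partial>lborel)"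
    by (rule lborel_pair.Fubini') measurable
  also have "\<dots> \<le> (\<integral>\<^sup>+s. 2 * (\<integral>\<^sup>+b. ennreal (b * f (b\<^sup>2 * (1 + s\<^sup>2))) * indicator {0..} b \<partial>lborel) \<partial>lborel)"
  proof (intro nn_integral_mono)
    fix s :: real
    have "(\<integral>\<^sup>+b. ennreal (\<bar>b\<bar> * f (b\<^sup>2 * (1 + s\<^sup>2))) \<partial>lborel)
        \<le> 2 * (\<integral>\<^sup>+b. ennreal (\<bar>b\<bar> * f (b\<^sup>2 * (1 + s\<^sup>2))) * indicator {0..} b \<partial>lborel)"
      by (rule nn_integral_lborel_even_le) auto
    also have "\<dots> = 2 * (\<integral>\<^sup>+b. ennreal (b * f (b\<^sup>2 * (1 + s\<^sup>2))) * indicator {0..} b \<partial>lborel)"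
      by (intro arg_cong2[where f="(*)"] refl, intro nn_integral_cong) (auto simp: indicator_def)
    finally show "(\<integral>\<^sup>+b. ennreal (\<bar>b\<bar> * f (b\<^sup>2 * (1 + s\<^sup>2))) \<partial>lborel) \<le> \<dots>" .
  qed
  also have "\<dots> = (\<integral>\<^sup>+s. ennreal (2 * A * E) * ennreal (1 / (1 + s\<^sup>2)) \<partial>lborel)"
    unfolding f_def A_def E_def using \<sigma> T
    by (subst nn_integral_lborel_cubic_gaussian_tail)
       (auto intro!: nn_integral_cong simp: add_pos_nonneg ennreal_mult'[symmetric] simp flip: ennreal_numeral ennreal_mult)
  also have "\<dots> \<le> ennreal (2 * A * E) * ennreal pi"
    by (subst nn_integral_cmult) (auto intro!: mult_left_mono nn_integral_lborel_inverse_1_plus_square)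
  finally have "(\<integral>\<^sup>+b. \<integral>\<^sup>+a. ennreal ((a\<^sup>2 + b\<^sup>2) * indicator {T..} (a\<^sup>2 + b\<^sup>2)) \<partial>normal_measure \<sigma> \<partial>normal_measure \<sigma>)
      \<le> ennreal (C * (2 * A * E) * pi)"
    using A \<sigma> by (simp add: mult_left_mono E_def C_def ennreal_mult'[symmetric] mult.assoc)
  also have "C * (2 * A * E) * pi = 2 * \<sigma>\<^sup>2 * qfun (T / (2 * \<sigma>\<^sup>2))"
    using \<sigma> by (simp add: C_def A_def E_def qfun_def field_simps power2_eq_square power4_eq_xxxx)
  finally show ?thesis .
qed

lemma DERIV_Erf: "DERIV Erf z :> 2 / sqrt pi * exp (- (z\<^sup>2))"
proof -
  define a b where "a = - \<bar>z\<bar> - 1" and "b = \<bar>z\<bar> + 1"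
  have ab: "a \<le> 0" "0 \<le> b" "a \<le> z" "z \<le> b" by (auto simp: a_def b_def)
  have "((\<lambda>u. LBINT y=0..u. exp (- (y\<^sup>2))) has_vector_derivative exp (- (z\<^sup>2))) (at z within {a..b})"
    using interval_integral_FTC2[of a 0 b "\<lambda>y. exp (- (y\<^sup>2))" z, OF ab(1,2) _ ab(3,4)]
    by (simp add: zero_ereal_def continuous_intros)
  moreover have "at z within {a..b} = at z"
    by (rule at_within_Icc_at) (auto simp: a_def b_def)
  ultimately have "((\<lambda>u. LBINT y=0..u. exp (- (y\<^sup>2))) has_real_derivative exp (- (z\<^sup>2))) (at z)"
    by (simp add: has_real_derivative_iff_has_vector_derivative)
  then show ?thesis
    unfolding Erf_def[abs_def] by (rule DERIV_cmult)
qed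

lemma Erf_mono: "l \<le> u \<Longrightarrow> Erf l \<le> Erf u"
  by (rule DERIV_nonneg_imp_nondecreasing) (auto intro!: exI DERIV_Erf)

lemma nn_integral_normal_density_Icc:
  assumes \<sigma>: "\<sigma> > 0" and "l \<le> u"
  shows "(\<integral>\<^sup>+x. ennreal (normal_density 0 \<sigma> x) * indicator {l..u} x \<partial>lborel)
       = ennreal ((Erf (u / sqrt (2 * \<sigma>\<^sup>2)) - Erf (l / sqrt (2 * \<sigma>\<^sup>2))) / 2)"
proof -
  define F where "F x = Erf (x / sqrt (2 * \<sigma>\<^sup>2)) / 2" for x
  have "DERIV F x :> 2 / sqrt pi * exp (- ((x / sqrt (2 * \<sigma>\<^sup>2))\<^sup>2)) * (1 / sqrt (2 * \<sigma>\<^sup>2)) / 2" for x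
    unfolding F_def by (intro DERIV_cdivide DERIV_chain2[OF DERIV_Erf] DERIV_ident)
  moreover have "2 / sqrt pi * exp (- ((x / sqrt (2 * \<sigma>\<^sup>2))\<^sup>2)) * (1 / sqrt (2 * \<sigma>\<^sup>2)) / 2 = normal_density 0 \<sigma> x" for x
    using \<sigma> by (simp add: normal_density_def power_divide real_sqrt_mult field_simps)
  ultimately have "(\<integral>\<^sup>+x. ennreal (normal_density 0 \<sigma> x) * indicator {l..u} x \<partial>lborel) = ennreal (F u - F l)"
    by (intro nn_integral_FTC_Icc \<open>l \<le> u\<close>) auto
  then show ?thesis by (simp add: F_def diff_divide_distrib)
qed

definition normal_abs_less_prob :: "real \<Rightarrow> real \<Rightarrow> real \<Rightarrow> real" where
  "normal_abs_less_prob \<sigma> \<tau> a = (Erf ((- a + \<tau>) / sqrt (2 * \<sigma>\<^sup>2)) - Erf ((- a - \<tau>) / sqrt (2 * \<sigma>\<^sup>2))) / 2"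

lemma normal_abs_less_prob_nonneg: "\<tau> \<ge> 0 \<Longrightarrow> normal_abs_less_prob \<sigma> \<tau> a \<ge> 0"
  unfolding normal_abs_less_prob_def by (auto intro!: Erf_mono divide_right_mono)

lemma nn_integral_normal_measure_abs_less:
  assumes "\<sigma> > 0" and "\<tau> > 0"
  shows "(\<integral>\<^sup>+x. indicator {x. \<bar>a + x\<bar> < \<tau>} x \<partial>normal_measure \<sigma>) \<le> ennreal (normal_abs_less_prob \<sigma> \<tau> a)"
proof -
  have "(\<integral>\<^sup>+x. indicator {x. \<bar>a + x\<bar> < \<tau>} x \<partial>normal_measure \<sigma>)
      \<le> (\<integral>\<^sup>+x. ennreal (normal_density 0 \<sigma> x) * indicator {- a - \<tau>..- a + \<tau>} x \<partial>lborel)"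
    by (subst nn_integral_density) (auto intro!: nn_integral_mono simp: indicator_def)
  also have "\<dots> = ennreal (normal_abs_less_prob \<sigma> \<tau> a)"
    unfolding normal_abs_less_prob_def using assms by (intro nn_integral_normal_density_Icc) simp_all
  finally show ?thesis .
qed

section \<open>Risk of hard thresholding\<close>

text \<open>For \<open>\<tau> < \<bar>S\<bar>\<close> the first term is \<open>2\<sigma>\<^sup>2 q 0 = 2\<sigma>\<^sup>2\<close>: this is the indicator term of \<open>G\<close>.\<close>

definition threshold_risk_bound :: "real \<Rightarrow> real \<Rightarrow> complex \<Rightarrow> real" where
  "threshold_risk_bound \<sigma> \<tau> S =
     2 * \<sigma>\<^sup>2 * qfun ((if \<tau> \<ge> cmod S then (\<tau> - cmod S)\<^sup>2 else 0) / (2 * \<sigma>\<^sup>2))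
     + (cmod S)\<^sup>2 * (normal_abs_less_prob \<sigma> \<tau> (Re S) * normal_abs_less_prob \<sigma> \<tau> (Im S))"

lemma threshold_risk_bound_nonneg:
  assumes "\<sigma> > 0" "\<tau> \<ge> 0"
  shows "threshold_risk_bound \<sigma> \<tau> S \<ge> 0"
  unfolding threshold_risk_bound_def using assms
  by (intro add_nonneg_nonneg mult_nonneg_nonneg normal_abs_less_prob_nonneg) (auto simp: qfun_def)

lemma threshold_sqerror_le:
  assumes "\<tau> > 0"
  shows "ennreal (threshold_sqerror S \<tau> (Complex a b))
     \<le> ennreal ((a\<^sup>2 + b\<^sup>2) * indicator {(if \<tau> \<ge> cmod S then (\<tau> - cmod S)\<^sup>2 else 0)..} (a\<^sup>2 + b\<^sup>2))
       + ennreal ((cmod S)\<^sup>2) * (indicator {x. \<bar>Re S + x\<bar> < \<tau>} a * indicator {x. \<bar>Im S + x\<bar> < \<tau>} b)"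
proof (cases "\<tau> \<le> cmod (S + Complex a b)")
  case True
  define T where "T = (if \<tau> \<ge> cmod S then (\<tau> - cmod S)\<^sup>2 else 0)"
  have norm2: "(cmod (Complex a b))\<^sup>2 = a\<^sup>2 + b\<^sup>2" by (simp add: cmod_power2)
  have "T \<le> a\<^sup>2 + b\<^sup>2"
  proof (cases "\<tau> \<ge> cmod S")
    case True': True
    have "\<tau> - cmod S \<le> cmod (Complex a b)"
      using True norm_triangle_ineq[of S "Complex a b"] by linarith
    then have "(\<tau> - cmod S)\<^sup>2 \<le> (cmod (Complex a b))\<^sup>2" using True' by (intro power_mono) auto
    then show ?thesis using True' norm2 by (simp add: T_def)
  qed (simp add: T_def)
  then have "threshold_sqerror S \<tau> (Complex a b) = (a\<^sup>2 + b\<^sup>2) * indicator {T..} (a\<^sup>2 + b\<^sup>2)"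
    using True norm2 by (simp add: threshold_sqerror_def)
  then show ?thesis unfolding T_def[symmetric] by (simp add: add_increasing2)
next
  case False
  have "\<bar>Re (S + Complex a b)\<bar> < \<tau>" "\<bar>Im (S + Complex a b)\<bar> < \<tau>"
    using False abs_Re_le_cmod[of "S + Complex a b"] abs_Im_le_cmod[of "S + Complex a b"] by linarith+
  then have "threshold_sqerror S \<tau> (Complex a b)
      = (cmod S)\<^sup>2 * (indicator {x. \<bar>Re S + x\<bar> < \<tau>} a * indicator {x. \<bar>Im S + x\<bar> < \<tau>} b)"
    using False by (simp add: threshold_sqerror_def indicator_def)
  then show ?thesis
    by (simp add: ennreal_mult' ennreal_indicator[symmetric] add_increasing)
qed

lemma nn_integral_threshold_sqerror_le:
  assumes \<sigma>: "\<sigma> > 0" and \<tau>: "\<tau> > 0"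
  shows "(\<integral>\<^sup>+b. \<integral>\<^sup>+a. ennreal (threshold_sqerror S \<tau> (Complex a b)) \<partial>normal_measure \<sigma> \<partial>normal_measure \<sigma>)
       \<le> ennreal (threshold_risk_bound \<sigma> \<tau> S)"
proof -
  define T where "T = (if \<tau> \<ge> cmod S then (\<tau> - cmod S)\<^sup>2 else 0)"
  define c where "c = ennreal ((cmod S)\<^sup>2)"
  define ia where "ia x = (indicator {x. \<bar>Re S + x\<bar> < \<tau>} x :: ennreal)" for x :: real
  define ib where "ib x = (indicator {x. \<bar>Im S + x\<bar> < \<tau>} x :: ennreal)" for x :: real
  define pa pb where "pa = normal_abs_less_prob \<sigma> \<tau> (Re S)" and "pb = normal_abs_less_prob \<sigma> \<tau> (Im S)"
  have [measurable]: "ia \<in> borel_measurable borel" "ib \<in> borel_measurable borel"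
    unfolding ia_def[abs_def] ib_def[abs_def] by measurable
  have "(\<integral>\<^sup>+b. \<integral>\<^sup>+a. ennreal (threshold_sqerror S \<tau> (Complex a b)) \<partial>normal_measure \<sigma> \<partial>normal_measure \<sigma>)
      \<le> (\<integral>\<^sup>+b. \<integral>\<^sup>+a. ennreal ((a\<^sup>2 + b\<^sup>2) * indicator {T..} (a\<^sup>2 + b\<^sup>2)) + c * (ia a * ib b) \<partial>normal_measure \<sigma> \<partial>normal_measure \<sigma>)"
    unfolding T_def c_def ia_def ib_def by (intro nn_integral_mono threshold_sqerror_le \<tau>)
  also have "\<dots> = (\<integral>\<^sup>+b. \<integral>\<^sup>+a. ennreal ((a\<^sup>2 + b\<^sup>2) * indicator {T..} (a\<^sup>2 + b\<^sup>2)) \<partial>normal_measure \<sigma> \<partial>normal_measure \<sigma>)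
      + (\<integral>\<^sup>+b. \<integral>\<^sup>+a. c * (ia a * ib b) \<partial>normal_measure \<sigma> \<partial>normal_measure \<sigma>)"
    by (subst nn_integral_add[symmetric]) (auto intro!: nn_integral_cong nn_integral_add)
  also have "(\<integral>\<^sup>+b. \<integral>\<^sup>+a. c * (ia a * ib b) \<partial>normal_measure \<sigma> \<partial>normal_measure \<sigma>)
      = c * ((\<integral>\<^sup>+a. ia a \<partial>normal_measure \<sigma>) * (\<integral>\<^sup>+b. ib b \<partial>normal_measure \<sigma>))"
    by (simp add: nn_integral_cmult nn_integral_multc mult.assoc mult.left_commute[of c] flip: mult.assoc[of c])
  finally have "(\<integral>\<^sup>+b. \<integral>\<^sup>+a. ennreal (threshold_sqerror S \<tau> (Complex a b)) \<partial>normal_measure \<sigma> \<partial>normal_measure \<sigma>)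
      \<le> (\<integral>\<^sup>+b. \<integral>\<^sup>+a. ennreal ((a\<^sup>2 + b\<^sup>2) * indicator {T..} (a\<^sup>2 + b\<^sup>2)) \<partial>normal_measure \<sigma> \<partial>normal_measure \<sigma>)
        + c * ((\<integral>\<^sup>+a. ia a \<partial>normal_measure \<sigma>) * (\<integral>\<^sup>+b. ib b \<partial>normal_measure \<sigma>))" .
  also have "\<dots> \<le> ennreal (2 * \<sigma>\<^sup>2 * qfun (T / (2 * \<sigma>\<^sup>2))) + c * (ennreal pa * ennreal pb)"
    unfolding ia_def ib_def pa_def pb_def using \<sigma> \<tau>
    by (intro add_mono mult_left_mono mult_mono nn_integral_normal_measure_tail_second_moment
        nn_integral_normal_measure_abs_less) (auto simp: T_def)
  also have "\<dots> = ennreal (threshold_risk_bound \<sigma> \<tau> S)"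
    unfolding threshold_risk_bound_def T_def[symmetric] pa_def[symmetric] pb_def[symmetric] c_def
    using \<sigma> \<tau> normal_abs_less_prob_nonneg[of \<tau>]
    by (simp add: pa_def pb_def qfun_def T_def ennreal_mult'' ennreal_plus)
  finally show ?thesis .
qed

lemma nn_integral_sqnorm_hard_threshold:
  assumes "K \<ge> 1" and "eps > 0"
  shows "(\<integral>\<^sup>+ w. ennreal (sqnorm K (\<lambda>k. hard_threshold K \<tau> (\<lambda>j. s j + noise_vec K w j) k - s k)) \<partial>noise_measure K eps)
       = ennreal (1 / real K) * (\<Sum>k<K. \<integral>\<^sup>+b. \<integral>\<^sup>+a. ennreal (threshold_sqerror (dft K s k) \<tau> (Complex a b))
            \<partial>normal_measure (eps * sqrt K) \<partial>normal_measure (eps * sqrt K))"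
proof -
  have "ennreal (sqnorm K (\<lambda>k. hard_threshold K \<tau> (\<lambda>j. s j + noise_vec K w j) k - s k))
      = ennreal (1 / real K * (\<Sum>k<K. threshold_sqerror (dft K s k) \<tau> (dft K (noise_vec K w) k)))" for w
    using assms(1) by (simp add: sqnorm_hard_threshold_error)
  also have "\<dots> w = ennreal (1 / real K) * (\<Sum>k<K. ennreal (threshold_sqerror (dft K s k) \<tau> (dft K (noise_vec K w) k)))" for w
    by (subst ennreal_mult'') (auto simp: sum_nonneg threshold_sqerror_nonneg sum_ennreal)
  finally have pointwise: "ennreal (sqnorm K (\<lambda>k. hard_threshold K \<tau> (\<lambda>j. s j + noise_vec K w j) k - s k))
      = ennreal (1 / real K) * (\<Sum>k<K. ennreal (threshold_sqerror (dft K s k) \<tau> (dft K (noise_vec K w) k)))" for w .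
  have "(\<integral>\<^sup>+ w. ennreal (sqnorm K (\<lambda>k. hard_threshold K \<tau> (\<lambda>j. s j + noise_vec K w j) k - s k)) \<partial>noise_measure K eps)
      = ennreal (1 / real K) * (\<integral>\<^sup>+ w. (\<Sum>k<K. ennreal (threshold_sqerror (dft K s k) \<tau> (dft K (noise_vec K w) k))) \<partial>noise_measure K eps)"
    unfolding pointwise by (rule nn_integral_cmult) measurable
  also have "\<dots> = ennreal (1 / real K) * (\<Sum>k<K. \<integral>\<^sup>+w. ennreal (threshold_sqerror (dft K s k) \<tau> (dft K (noise_vec K w) k)) \<partial>noise_measure K eps)"
    by (intro arg_cong2[where f="(*)"] refl nn_integral_sum) measurable
  also have "\<dots> = ennreal (1 / real K) * (\<Sum>k<K. \<integral>\<^sup>+b. \<integral>\<^sup>+a. ennreal (threshold_sqerror (dft K s k) \<tau> (Complex a b))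
            \<partial>normal_measure (eps * sqrt K) \<partial>normal_measure (eps * sqrt K))"
    by (intro arg_cong2[where f="(*)"] refl sum.cong nn_integral_dft_noise assms) measurable
  finally show ?thesis .
qed

lemma two_eps_square_G_eq:
  assumes "K \<ge> 1" and "eps > 0"
  shows "2 * eps\<^sup>2 * G tau K eps s
       = (\<Sum>k<K. threshold_risk_bound (eps * sqrt K) tau (dft K s k)) / (real K)\<^sup>2"
proof -
  define P1 where "P1 k = (if tau \<ge> cmod (dft K s k)
       then qfun ((tau - cmod (dft K s k))\<^sup>2 / (2 * eps\<^sup>2 * real K)) else 0)
      + (if tau < cmod (dft K s k) then 1 else 0)" for k
  define P2 where "P2 k = (cmod (dft K s k))\<^sup>2 / (4 * real K)
      * (Erf ((- Re (dft K s k) + tau) / sqrt (2 * eps\<^sup>2 * real K))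
         - Erf ((- Re (dft K s k) - tau) / sqrt (2 * eps\<^sup>2 * real K)))
      * (Erf ((- Im (dft K s k) + tau) / sqrt (2 * eps\<^sup>2 * real K))
         - Erf ((- Im (dft K s k) - tau) / sqrt (2 * eps\<^sup>2 * real K)))" for k
  have "(eps * sqrt K)\<^sup>2 = eps\<^sup>2 * real K"
    by (simp add: power_mult_distrib)
  then have summand: "2 * eps\<^sup>2 * ((1 / real K) * P1 k + (1 / (2 * real K * eps\<^sup>2)) * P2 k)
      = threshold_risk_bound (eps * sqrt K) tau (dft K s k) / (real K)\<^sup>2" for k
    using assms
    by (simp add: P1_def P2_def threshold_risk_bound_def normal_abs_less_prob_def qfun_def
        field_simps power2_eq_square)
  have "G tau K eps s = (1 / real K) * (\<Sum>k<K. P1 k) + (1 / (2 * real K * eps\<^sup>2)) * (\<Sum>k<K. P2 k)"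
    unfolding G_def P1_def P2_def ..
  also have "\<dots> = (\<Sum>k<K. (1 / real K) * P1 k + (1 / (2 * real K * eps\<^sup>2)) * P2 k)"
    by (simp only: sum.distrib sum_distrib_left)
  finally show ?thesis
    by (simp only: sum_distrib_left summand sum_divide_distrib)
qed

theorem theorem1:
  fixes K :: nat and eps tau :: real and s :: "nat \<Rightarrow> complex"
  assumes "K \<ge> 1" and "eps > 0" and "tau > 0"
  shows "(1 / ennreal (real K)) *
           (\<integral>\<^sup>+ w. ennreal (sqnorm K (\<lambda>k. hard_threshold K tau (\<lambda>j. s j + noise_vec K w j) k - s k))
              \<partial>noise_measure K eps)
         \<le> ennreal (2 * eps\<^sup>2 * G tau K eps s)"
proof -
  define \<sigma> where "\<sigma> = eps * sqrt K"
  have \<sigma>: "\<sigma> > 0" using assms by (simp add: \<sigma>_def)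
  have K: "1 / ennreal (real K) = ennreal (1 / real K)"
    using assms(1) divide_ennreal[of 1 "real K"] by simp
  have "(1 / ennreal (real K)) *
           (\<integral>\<^sup>+ w. ennreal (sqnorm K (\<lambda>k. hard_threshold K tau (\<lambda>j. s j + noise_vec K w j) k - s k))
              \<partial>noise_measure K eps)
      = ennreal (1 / real K) * (ennreal (1 / real K) * (\<Sum>k<K. \<integral>\<^sup>+b. \<integral>\<^sup>+a.
          ennreal (threshold_sqerror (dft K s k) tau (Complex a b)) \<partial>normal_measure \<sigma> \<partial>normal_measure \<sigma>))"
    unfolding K \<sigma>_def using assms by (simp add: nn_integral_sqnorm_hard_threshold)
  also have "\<dots> \<le> ennreal (1 / real K) * (ennreal (1 / real K) * (\<Sum>k<K. ennreal (threshold_risk_bound \<sigma> tau (dft K s k))))"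
    using \<sigma> assms(3) by (intro mult_left_mono sum_mono nn_integral_threshold_sqerror_le) auto
  also have "\<dots> = ennreal ((\<Sum>k<K. threshold_risk_bound \<sigma> tau (dft K s k)) / (real K)\<^sup>2)"
    using \<sigma> assms(3)
    by (simp add: threshold_risk_bound_nonneg sum_nonneg ennreal_mult'' power2_eq_square divide_inverse
        mult_ac flip: sum_ennreal)
  also have "\<dots> = ennreal (2 * eps\<^sup>2 * G tau K eps s)"
    unfolding \<sigma>_def using assms by (simp add: two_eps_square_G_eq)
  finally show ?thesis .
qed

end
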